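(* Let $K$ be a field of characteristic $p$ with $K \neq \mathbb{F}_2$. Then every arithmetic progression $\{a + bt : t \in \mathbb{N}_0\}$ with $a, b \in \mathbb{N}_0$ is a $K$-DML set over split torus.
   Context: For a quasi-projective variety $X$ over $K$, a set $S \subseteq \mathbb{N}_0$ is a $K$-DML set over $X$ if there exist an endomorphism $\Phi$ of $X$ (a morphism $X \to X$ defined over $K$), a point $\alpha \in X(K)$ and a closed subvariety $V \subseteq X$ defined over $K$ (not necessarily irreducible) such that $S = \{ n \in \mathbb{N}_0 : \Phi^n(\alpha) \in V(K)\}$. $S$ is a $K$-DML set over split torus if it is a $K$-DML set over $\mathbb{G}_m^k$ for some $k \in \mathbb{N}$. *)

theory Defs
  imports Main "HOL-Computational_Algebra.Primes"
begin

text \<open>Points of the split torus G_m^k over K: functions nat => K, nonzero on coordinates i < k,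
  and (canonically) zero on coordinates i >= k.\<close>
definition torus_pt :: "nat \<Rightarrow> (nat \<Rightarrow> 'a::field) \<Rightarrow> bool" where
  "torus_pt k x \<longleftrightarrow> (\<forall>i<k. x i \<noteq> 0) \<and> (\<forall>i\<ge>k. x i = 0)"

text \<open>Laurent polynomials in k variables over K: finitely supported coefficient functions
  on exponent vectors e :: nat => int, supported on vectors vanishing at indices >= k.\<close>
definition lpoly :: "nat \<Rightarrow> ((nat \<Rightarrow> int) \<Rightarrow> 'a::field) \<Rightarrow> bool" where
  "lpoly k c \<longleftrightarrow> finite {e. c e \<noteq> 0} \<and> (\<forall>e. c e \<noteq> 0 \<longrightarrow> (\<forall>i\<ge>k. e i = 0))"

definition lmono :: "nat \<Rightarrow> (nat \<Rightarrow> int) \<Rightarrow> (nat \<Rightarrow> 'a::field) \<Rightarrow> 'a" where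
  "lmono k e x = (\<Prod>i<k. x i powi e i)"

definition leval :: "nat \<Rightarrow> ((nat \<Rightarrow> int) \<Rightarrow> 'a::field) \<Rightarrow> (nat \<Rightarrow> 'a) \<Rightarrow> 'a" where
  "leval k c x = (\<Sum>e\<in>{e. c e \<noteq> 0}. c e * lmono k e x)"

definition lmult :: "((nat \<Rightarrow> int) \<Rightarrow> 'a::field) \<Rightarrow> ((nat \<Rightarrow> int) \<Rightarrow> 'a) \<Rightarrow> (nat \<Rightarrow> int) \<Rightarrow> 'a" where
  "lmult c d e = (\<Sum>u\<in>{u. c u \<noteq> 0}. c u * d (\<lambda>i. e i - u i))"

definition lone :: "(nat \<Rightarrow> int) \<Rightarrow> 'a::field" where
  "lone e = (if e = (\<lambda>_. 0) then 1 else 0)"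

definition lunit :: "nat \<Rightarrow> ((nat \<Rightarrow> int) \<Rightarrow> 'a::field) \<Rightarrow> bool" where
  "lunit k c \<longleftrightarrow> lpoly k c \<and> (\<exists>d. lpoly k d \<and> lmult c d = lone)"

text \<open>An endomorphism of G_m^k defined over K is given by a k-tuple of regular functions
  on G_m^k (Laurent polynomials) which are invertible, i.e. units of the coordinate ring.\<close>
definition torus_endo :: "nat \<Rightarrow> (nat \<Rightarrow> (nat \<Rightarrow> int) \<Rightarrow> 'a::field) \<Rightarrow> bool" where
  "torus_endo k f \<longleftrightarrow> (\<forall>i<k. lunit k (f i))"

definition endo_map :: "nat \<Rightarrow> (nat \<Rightarrow> (nat \<Rightarrow> int) \<Rightarrow> 'a::field) \<Rightarrow> (nat \<Rightarrow> 'a) \<Rightarrow> (nat \<Rightarrow> 'a)" where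
  "endo_map k f x = (\<lambda>i. if i < k then leval k (f i) x else 0)"

text \<open>K-DML sets over G_m^k: closed subvarieties V of G_m^k defined over K are the common
  zero loci in G_m^k of finitely many Laurent polynomials over K.\<close>
definition dml_torus :: "'a::field itself \<Rightarrow> nat \<Rightarrow> nat set \<Rightarrow> bool" where
  "dml_torus _ k S \<longleftrightarrow>
     (\<exists>(f :: nat \<Rightarrow> (nat \<Rightarrow> int) \<Rightarrow> 'a) (\<alpha> :: nat \<Rightarrow> 'a) P.
        torus_endo k f \<and> torus_pt k \<alpha> \<and> finite P \<and> (\<forall>c\<in>P. lpoly k c) \<and>
        S = {n. \<forall>c\<in>P. leval k c ((endo_map k f ^^ n) \<alpha>) = 0})"

definition dml_split_torus :: "'a::field itself \<Rightarrow> nat set \<Rightarrow> bool" where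
  "dml_split_torus T S \<longleftrightarrow> (\<exists>k\<ge>1. dml_torus T k S)"

end

theory Submission
  imports Defs
begin

text \<open>Let \<sigma> map the coordinate indices {0..<k} into themselves. The monomial endomorphism
  x \<mapsto> (x_{\<sigma> 0}, ..., x_{\<sigma> (k-1)}) of G_m^k moves the coordinates of a point along \<sigma>, so if
  the starting point has coordinate 1 at index j and a fixed t \<noteq> 0, 1 at all other
  indices (this is where K \<noteq> F_2 is needed), then its n-th iterate lies on the subtorus
  x_0 = 1 exactly when (\<sigma> ^^ n) 0 = j. Choosing for \<sigma> a "rho-shaped" map, a path of
  length a running into a cycle of length b, the return times to index a form the
  progression a + b\<nat>; for b = 0 a path of length a + 1 ending in a fixed point is
  visited at index a only at time a.\<close>

definition unit_exp :: "nat \<Rightarrow> nat \<Rightarrow> int" where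
  "unit_exp m = (\<lambda>l. if l = m then 1 else 0)"

definition lmonomial :: "(nat \<Rightarrow> int) \<Rightarrow> (nat \<Rightarrow> int) \<Rightarrow> 'a::field" where
  "lmonomial v = (\<lambda>e. if e = v then 1 else 0)"

lemma lmonomial_support: "{e. (lmonomial v e :: 'a::field) \<noteq> 0} = {v}"
  by (auto simp: lmonomial_def)

lemma lmono_unit_exp:
  assumes "m < k"
  shows "lmono k (unit_exp m) x = x m"
proof -
  have "lmono k (unit_exp m) x = (\<Prod>i<k. if i = m then x i else 1)"
    unfolding lmono_def unit_exp_def by (intro prod.cong) auto
  also have "\<dots> = x m"
    using assms by simp
  finally show ?thesis .
qed

lemma lmono_zero_exp: "lmono k (\<lambda>_. 0) x = 1"
  unfolding lmono_def by simp

lemma leval_lmonomial: "leval k (lmonomial v) x = lmono k v x"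
  unfolding leval_def lmonomial_support by (simp add: lmonomial_def)

lemma lpoly_lmonomial:
  assumes "\<forall>i\<ge>k. v i = 0"
  shows "lpoly k (lmonomial v :: _ \<Rightarrow> 'a::field)"
  unfolding lpoly_def lmonomial_support using assms by (auto simp: lmonomial_def)

lemma lmult_lmonomial_uminus: "lmult (lmonomial v) (lmonomial (\<lambda>i. - v i)) = (lone :: _ \<Rightarrow> 'a::field)"
proof
  fix e
  have shift_eq: "(\<lambda>i. e i - v i) = (\<lambda>i. - v i) \<longleftrightarrow> e = (\<lambda>_. 0)"
    by (metis add.inverse_unique diff_add_cancel minus_diff_eq)
  have "lmult (lmonomial v) (lmonomial (\<lambda>i. - v i)) e =
      (lmonomial (\<lambda>i. - v i) (\<lambda>i. e i - v i) :: 'a)"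
    unfolding lmult_def lmonomial_support by (simp add: lmonomial_def)
  then show "lmult (lmonomial v) (lmonomial (\<lambda>i. - v i)) e = (lone e :: 'a)"
    by (simp add: lmonomial_def lone_def shift_eq)
qed

lemma lunit_lmonomial:
  assumes "\<forall>i\<ge>k. v i = 0"
  shows "lunit k (lmonomial v :: _ \<Rightarrow> 'a::field)"
  unfolding lunit_def
  using assms lpoly_lmonomial[of k v] lpoly_lmonomial[of k "\<lambda>i. - v i"] lmult_lmonomial_uminus
  by auto

definition coord_endo :: "(nat \<Rightarrow> nat) \<Rightarrow> nat \<Rightarrow> (nat \<Rightarrow> int) \<Rightarrow> 'a::field" where
  "coord_endo \<sigma> = (\<lambda>i. lmonomial (unit_exp (\<sigma> i)))"

lemma torus_endo_coord_endo:
  assumes "\<forall>i<k. \<sigma> i < k"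
  shows "torus_endo k (coord_endo \<sigma> :: _ \<Rightarrow> _ \<Rightarrow> 'a::field)"
  unfolding torus_endo_def coord_endo_def
  using assms by (auto intro!: lunit_lmonomial simp: unit_exp_def)

lemma endo_map_coord_endo:
  assumes "\<forall>i<k. \<sigma> i < k"
  shows "endo_map k (coord_endo \<sigma>) x = (\<lambda>i. if i < k then x (\<sigma> i) else (0 :: 'a::field))"
  unfolding endo_map_def coord_endo_def
  using assms by (auto simp: leval_lmonomial lmono_unit_exp)

lemma funpow_endo_map_coord_endo:
  assumes "\<forall>i<k. \<sigma> i < k" and "torus_pt k x"
  shows "(endo_map k (coord_endo \<sigma>) ^^ n) x = (\<lambda>i. if i < k then x ((\<sigma> ^^ n) i) else (0 :: 'a::field))"
proof (induction n)
  case 0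
  show ?case
    using assms(2) by (auto simp: torus_pt_def)
next
  case (Suc n)
  have "(endo_map k (coord_endo \<sigma>) ^^ Suc n) x = endo_map k (coord_endo \<sigma>) ((endo_map k (coord_endo \<sigma>) ^^ n) x)"
    by simp
  also have "\<dots> = (\<lambda>i. if i < k then x ((\<sigma> ^^ n) (\<sigma> i)) else 0)"
    using assms(1) by (intro ext) (simp add: endo_map_coord_endo Suc)
  finally show ?case
    by (simp only: funpow_Suc_right comp_apply)
qed

lemma funpow_maps_to:
  assumes "\<forall>i<k. \<sigma> i < k" and "i < k"
  shows "(\<sigma> ^^ n) i < k"
  using assms by (induction n) auto

lemma dml_torus_funpow_hits:
  fixes t :: "'a::field"
  assumes maps_to: "\<forall>i<k. \<sigma> i < k" and "i\<^sub>0 < k" and "j < k"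
    and "t \<noteq> 0" and "t \<noteq> 1"
  shows "dml_torus TYPE('a) k {n. (\<sigma> ^^ n) i\<^sub>0 = j}"
proof -
  define \<alpha> :: "nat \<Rightarrow> 'a" where "\<alpha> = (\<lambda>i. if i < k then (if i = j then 1 else t) else 0)"
  define c :: "(nat \<Rightarrow> int) \<Rightarrow> 'a" where
    "c = (\<lambda>e. if e = unit_exp i\<^sub>0 then 1 else if e = (\<lambda>_. 0) then -1 else 0)"
  have unit_exp_nonzero: "unit_exp i\<^sub>0 \<noteq> (\<lambda>_. 0)"
    unfolding unit_exp_def by (metis one_neq_zero)
  have c_support: "{e. c e \<noteq> 0} = {unit_exp i\<^sub>0, (\<lambda>_. 0)}"
    using unit_exp_nonzero by (auto simp: c_def)
  have "lpoly k c"
    unfolding lpoly_def c_support using \<open>i\<^sub>0 < k\<close> by (auto simp: c_def unit_exp_def)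
  have leval_c: "leval k c x = x i\<^sub>0 - 1" for x
    unfolding leval_def c_support using unit_exp_nonzero \<open>i\<^sub>0 < k\<close>
    by (simp add: c_def lmono_unit_exp lmono_zero_exp)
  have "torus_pt k \<alpha>"
    unfolding torus_pt_def \<alpha>_def using \<open>t \<noteq> 0\<close> by auto
  have "leval k c ((endo_map k (coord_endo \<sigma>) ^^ n) \<alpha>) = \<alpha> ((\<sigma> ^^ n) i\<^sub>0) - 1" for n
    using \<open>i\<^sub>0 < k\<close> by (simp add: leval_c funpow_endo_map_coord_endo[OF maps_to \<open>torus_pt k \<alpha>\<close>])
  then have "leval k c ((endo_map k (coord_endo \<sigma>) ^^ n) \<alpha>) = 0 \<longleftrightarrow> (\<sigma> ^^ n) i\<^sub>0 = j" for n
    using funpow_maps_to[OF maps_to \<open>i\<^sub>0 < k\<close>, of n] \<open>t \<noteq> 1\<close> by (simp add: \<alpha>_def)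
  then have "{n. (\<sigma> ^^ n) i\<^sub>0 = j} = {n. \<forall>c\<in>{c}. leval k c ((endo_map k (coord_endo \<sigma>) ^^ n) \<alpha>) = 0}"
    by auto
  then show ?thesis
    unfolding dml_torus_def
    using torus_endo_coord_endo[OF maps_to] \<open>torus_pt k \<alpha>\<close> \<open>lpoly k c\<close> by blast
qed

lemma field_exists_ne_0_1:
  assumes "\<not> (finite (UNIV :: 'a::field set) \<and> card (UNIV :: 'a set) = 2)"
  shows "\<exists>t :: 'a. t \<noteq> 0 \<and> t \<noteq> 1"
proof (rule ccontr)
  assume "\<not> (\<exists>t :: 'a. t \<noteq> 0 \<and> t \<noteq> 1)"
  then have UNIV_eq: "(UNIV :: 'a set) = {0, 1}"
    by blast
  have "finite (UNIV :: 'a set) \<and> card (UNIV :: 'a set) = 2"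
    by (subst (1 2) UNIV_eq) simp
  then show False
    using assms by blast
qed

definition rho_step :: "nat \<Rightarrow> nat \<Rightarrow> nat \<Rightarrow> nat" where
  "rho_step a c i = (if i + 1 < a + c then i + 1 else a)"

lemma rho_step_maps_to: "0 < c \<Longrightarrow> i < a + c \<Longrightarrow> rho_step a c i < a + c"
  by (simp add: rho_step_def)

lemma funpow_rho_step:
  assumes "0 < c"
  shows "(rho_step a c ^^ n) 0 = (if n < a then n else a + (n - a) mod c)"
proof (induction n)
  case 0
  then show ?case by simp
next
  case (Suc n)
  show ?case
  proof (cases "n < a")
    case True
    then show ?thesis
      using Suc assms by (auto simp: rho_step_def)
  next
    case False
    define r where "r = (n - a) mod c"
    have "r < c"
      using assms by (simp add: r_def)
    have "(Suc n - a) mod c = (if Suc r = c then 0 else Suc r)"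
      using False by (simp add: Suc_diff_le mod_Suc r_def)
    then show ?thesis
      using Suc False \<open>r < c\<close> by (auto simp: rho_step_def r_def)
  qed
qed

lemma rho_step_hits_tail:
  assumes "0 < c" and "j < a"
  shows "{n. (rho_step a c ^^ n) 0 = j} = {j}"
  using assms by (auto simp: funpow_rho_step)

lemma rho_step_hits_cycle_start:
  assumes "0 < c"
  shows "{n. (rho_step a c ^^ n) 0 = a} = {n. \<exists>t. n = a + c * t}"
proof -
  have "(rho_step a c ^^ n) 0 = a \<longleftrightarrow> (\<exists>t. n = a + c * t)" for n
  proof (cases "n < a")
    case True
    then show ?thesis
      using assms by (auto simp: funpow_rho_step)
  next
    case False
    then have "(rho_step a c ^^ n) 0 = a \<longleftrightarrow> c dvd n - a"
      using assms by (simp add: funpow_rho_step dvd_eq_mod_eq_0)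
    also have "\<dots> \<longleftrightarrow> (\<exists>t. n = a + c * t)"
      using False by (metis add_diff_cancel_left' dvd_def le_add_diff_inverse not_less)
    finally show ?thesis .
  qed
  then show ?thesis
    by blast
qed

theorem lemma2p2:
  fixes a b p :: nat
  assumes "CHAR('a::field) = p" and "prime p"
    and "\<not> (finite (UNIV :: 'a set) \<and> card (UNIV :: 'a set) = 2)"
  shows "dml_split_torus TYPE('a) {n. \<exists>t. n = a + b * t}"
proof -
  obtain t :: 'a where "t \<noteq> 0" and "t \<noteq> 1"
    using field_exists_ne_0_1 assms(3) by blast
  show ?thesis
  proof (cases "b = 0")
    case True
    have "dml_torus TYPE('a) (a + 2) {n. (rho_step (Suc a) 1 ^^ n) 0 = a}"
      using \<open>t \<noteq> 0\<close> \<open>t \<noteq> 1\<close> rho_step_maps_to[of 1 _ "Suc a"]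
      by (intro dml_torus_funpow_hits) auto
    then show ?thesis
      unfolding dml_split_torus_def using True rho_step_hits_tail[of 1 a "Suc a"]
      by (intro exI[of _ "a + 2"]) simp
  next
    case False
    have "dml_torus TYPE('a) (a + b) {n. (rho_step a b ^^ n) 0 = a}"
      using False \<open>t \<noteq> 0\<close> \<open>t \<noteq> 1\<close> rho_step_maps_to[of b]
      by (intro dml_torus_funpow_hits) auto
    then show ?thesis
      unfolding dml_split_torus_def using False rho_step_hits_cycle_start[of b a]
      by (intro exI[of _ "a + b"]) simp
  qed
qed

end
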